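(* For every $0<\epsilon<1$, $\{\Xi_{\mathrm{Sp}_{\mathrm{ap},\epsilon}},\Omega^B_{\ell^2(\mathbb{N})},\mathcal{M}_{\mathrm{H}},\Lambda_{\mathbb{N}}\}\notin\Delta_2^G$; that is, there is no sequence of general algorithms $\Gamma_n$ with $\lim_{n\to\infty}\Gamma_n(F)=\mathrm{Sp}_{\mathrm{ap},\epsilon}(\mathcal{K}_F)$ in the Hausdorff metric for every $F\in\Omega^B_{\ell^2(\mathbb{N})}$.
   Context: $\ell^2(\mathbb{N})$ is regarded as an RKHS of functions on $\mathbb{N}$ with kernel functions $\mathfrak{K}_i=e_i$ (the standard basis vectors). For $F:\mathbb{N}\to\mathbb{N}$ the Koopman operator is $\mathcal{K}_Fg=g\circ F$. $\Omega^B_{\ell^2(\mathbb{N})}$ is the set of $F:\mathbb{N}\to\mathbb{N}$ for which $\mathcal{K}_F$ is a bounded operator on all of $\ell^2(\mathbb{N})$. $\Xi_{\mathrm{Sp}_{\mathrm{ap},\epsilon}}(F)=\mathrm{Sp}_{\mathrm{ap},\epsilon}(\mathcal{K}_F)=\overline{\{z\in\mathbb{C}:\sigma_{\inf}(\mathcal{K}_F-zI)<\epsilon\}}$ where $\sigma_{\inf}(T)=\inf_{\|g\|=1}\|Tg\|$. $\mathcal{M}_{\mathrm{H}}$ is the set of nonempty compact subsets of $\mathbb{C}$ with the Hausdorff metric. $\Lambda_{\mathbb{N}}=\{F\mapsto F(j):j\in\mathbb{N}\}$. A general algorithm for a problem $\{\Xi,\Omega,\mathcal{M},\Lambda\}$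 is a map $\Gamma:\Omega\to\mathcal{M}$ such that for each $\zeta\in\Omega$ there is a nonempty finite $\Lambda_\Gamma(\zeta)\subset\Lambda$ such that whenever $\zeta'\in\Omega$ satisfies $f(\zeta')=f(\zeta)$ for all $f\in\Lambda_\Gamma(\zeta)$, then $\Lambda_\Gamma(\zeta')=\Lambda_\Gamma(\zeta)$ and $\Gamma(\zeta')=\Gamma(\zeta)$. The problem is in $\Delta_2^G$ iff there exist general algorithms $\Gamma_n$ with $\Gamma_n(\zeta)\to\Xi(\zeta)$ for all $\zeta\in\Omega$. *)

theory Defs
  imports "HOL-Analysis.Analysis"
begin

definition l2 :: "(nat \<Rightarrow> complex) set" where
  "l2 = {g. summable (\<lambda>i. (cmod (g i))^2)}"

definition l2norm :: "(nat \<Rightarrow> complex) \<Rightarrow> real" where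
  "l2norm g = sqrt (\<Sum>i. (cmod (g i))^2)"

definition koopman :: "(nat \<Rightarrow> nat) \<Rightarrow> (nat \<Rightarrow> complex) \<Rightarrow> (nat \<Rightarrow> complex)" where
  "koopman F g = g \<circ> F"

definition OmegaB :: "(nat \<Rightarrow> nat) set" where
  "OmegaB = {F. (\<forall>g\<in>l2. koopman F g \<in> l2) \<and>
                (\<exists>C. \<forall>g\<in>l2. l2norm (koopman F g) \<le> C * l2norm g)}"

definition sigma_inf_koopman :: "(nat \<Rightarrow> nat) \<Rightarrow> complex \<Rightarrow> real" where
  "sigma_inf_koopman F z =
     Inf {l2norm (\<lambda>i. koopman F g i - z * g i) | g. g \<in> l2 \<and> l2norm g = 1}"

definition Sp_ap_eps :: "real \<Rightarrow> (nat \<Rightarrow> nat) \<Rightarrow> complex set" where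
  "Sp_ap_eps \<epsilon> F = closure {z. sigma_inf_koopman F z < \<epsilon>}"

text \<open>Hausdorff distance (used on nonempty compact sets).\<close>
definition hausdorff_dist :: "complex set \<Rightarrow> complex set \<Rightarrow> real" where
  "hausdorff_dist A B = max (SUP a\<in>A. infdist a B) (SUP b\<in>B. infdist b A)"

text \<open>General algorithm on domain Omega with evaluation set Lambda_N = {F |-> F j}:
  L F is the (finite, nonempty) set of indices j whose values F j are read.\<close>
definition general_algorithm ::
  "(nat \<Rightarrow> nat) set \<Rightarrow> ((nat \<Rightarrow> nat) \<Rightarrow> complex set) \<Rightarrow> ((nat \<Rightarrow> nat) \<Rightarrow> nat set) \<Rightarrow> bool" where
  "general_algorithm \<Omega> \<Gamma> L \<longleftrightarrow>
     (\<forall>F\<in>\<Omega>. \<Gamma> F \<noteq> {} \<and> compact (\<Gamma> F) \<and> finite (L F) \<and> L F \<noteq> {} \<and>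
        (\<forall>F'\<in>\<Omega>. (\<forall>j\<in>L F. F' j = F j) \<longrightarrow> L F' = L F \<and> \<Gamma> F' = \<Gamma> F))"

end

(*
  For a bijection F the Koopman operator K_F is unitary, so sigma_inf(K_F - z I) >= |1 - |z||
  and Sp_ap_eps(K_F) avoids the open disc of radius 1 - eps.  For an injection H that misses a
  point a, the basis vector e_a lies in the kernel of K_H, so 0 is in Sp_ap_eps(K_H).
  An algorithm reads only finitely many values F j.  Diagonalising against the algorithms, we
  build a bijection F, a product of finite cycles, such that for infinitely many n the n-th
  algorithm cannot tell F apart from an injection H for which Gamma_n(H) is already within
  delta = (1 - eps)/2 of Sp_ap_eps(K_H).  Then Gamma_n(F) = Gamma_n(H) contains a point of modulus
  below delta, which is at distance at least delta from Sp_ap_eps(K_F): no convergence.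
*)
theory Submission
  imports Defs "HOL-Combinatorics.Permutations"
begin

lemma l2norm_power2:
  assumes "g \<in> l2"
  shows "(l2norm g)\<^sup>2 = (\<Sum>i. (cmod (g i))\<^sup>2)"
  using assms by (simp add: l2_def l2norm_def suminf_nonneg)

lemma l2norm_nonneg: "g \<in> l2 \<Longrightarrow> 0 \<le> l2norm g"
  by (simp add: l2_def l2norm_def suminf_nonneg)

lemma l2_comp_inj:
  assumes "inj F" "g \<in> l2"
  shows "(\<lambda>i. g (F i)) \<in> l2"
  using summable_reindex[OF _ assms(1), of "\<lambda>i. (cmod (g i))\<^sup>2"] assms(2)
  by (simp add: l2_def o_def)

lemma l2norm_comp_inj_le:
  assumes "inj F" "g \<in> l2"
  shows "l2norm (\<lambda>i. g (F i)) \<le> l2norm g"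
  using suminf_reindex_mono[OF _ assms(1), of "\<lambda>i. (cmod (g i))\<^sup>2"] assms(2)
  by (simp add: l2_def l2norm_def o_def)

lemma l2norm_comp_bij:
  assumes "bij F" "g \<in> l2"
  shows "l2norm (\<lambda>i. g (F i)) = l2norm g"
  using suminf_reindex[OF _ bij_is_inj[OF assms(1)], of "\<lambda>i. (cmod (g i))\<^sup>2"] assms
  by (simp add: l2_def l2norm_def o_def bij_is_surj)

lemma indicator_in_l2: "(indicator {a} :: nat \<Rightarrow> complex) \<in> l2"
  and l2norm_indicator: "l2norm (indicator {a} :: nat \<Rightarrow> complex) = 1"
proof -
  have "(\<lambda>i. (cmod (indicator {a} i :: complex))\<^sup>2) = (\<lambda>i. if i = a then 1 else 0)"
    by (auto simp: indicator_def)
  then have "(\<lambda>i. (cmod (indicator {a} i :: complex))\<^sup>2) sums 1"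
    using sums_single[of a "\<lambda>_. 1 :: real"] by simp
  then show "(indicator {a} :: nat \<Rightarrow> complex) \<in> l2" "l2norm (indicator {a} :: nat \<Rightarrow> complex) = 1"
    by (auto simp: l2_def l2norm_def sums_iff)
qed

lemma norm_diff_mult_power2_le:
  "(cmod (a - z * b))\<^sup>2 \<le> 2 * (cmod a)\<^sup>2 + 2 * (cmod z)\<^sup>2 * (cmod b)\<^sup>2"
proof -
  have "cmod (a - z * b) \<le> cmod a + cmod z * cmod b"
    by (metis norm_mult norm_triangle_ineq4)
  then have "(cmod (a - z * b))\<^sup>2 \<le> (cmod a + cmod z * cmod b)\<^sup>2"
    by (simp add: power_mono)
  also have "\<dots> \<le> 2 * (cmod a)\<^sup>2 + 2 * (cmod z * cmod b)\<^sup>2"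
    using sum_squares_bound[of "cmod a" "cmod z * cmod b"] by (simp add: power2_sum)
  finally show ?thesis
    by (simp add: power_mult_distrib)
qed

(* Being linear in |a|^2 and |b|^2, this bound can be summed over the indices; it stands in for
   the reverse triangle inequality in l2, which would need Minkowski's inequality for series. *)
lemma norm_diff_mult_power2_ge:
  "(1 - cmod z) * (cmod a)\<^sup>2 + ((cmod z)\<^sup>2 - cmod z) * (cmod b)\<^sup>2 \<le> (cmod (a - z * b))\<^sup>2"
proof -
  have "(cmod a - cmod z * cmod b)\<^sup>2 \<le> (cmod (a - z * b))\<^sup>2"
    by (metis abs_ge_zero norm_mult norm_triangle_ineq3 power2_abs power_mono)
  moreover have "cmod z * (2 * cmod a * cmod b) \<le> cmod z * ((cmod a)\<^sup>2 + (cmod b)\<^sup>2)"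
    using sum_squares_bound[of "cmod a" "cmod b"] by (intro mult_left_mono) auto
  ultimately show ?thesis
    by (simp add: power2_eq_square algebra_simps)
qed

lemma l2_diff_mult:
  assumes "g \<in> l2" "h \<in> l2"
  shows "(\<lambda>i. h i - z * g i) \<in> l2"
  unfolding mem_Collect_eq l2_def
proof (rule summable_comparison_test'[where N = 0])
  show "summable (\<lambda>i. 2 * (cmod (h i))\<^sup>2 + 2 * (cmod z)\<^sup>2 * (cmod (g i))\<^sup>2)"
    using assms unfolding l2_def by (intro summable_add summable_mult) auto
qed (simp add: norm_diff_mult_power2_le)

lemma l2norm_diff_mult_power2_ge:
  assumes "g \<in> l2" "h \<in> l2"
  shows "(1 - cmod z) * (l2norm h)\<^sup>2 + ((cmod z)\<^sup>2 - cmod z) * (l2norm g)\<^sup>2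
           \<le> (l2norm (\<lambda>i. h i - z * g i))\<^sup>2"
proof -
  have g: "summable (\<lambda>i. (cmod (g i))\<^sup>2)" and h: "summable (\<lambda>i. (cmod (h i))\<^sup>2)"
    using assms by (simp_all add: l2_def)
  have "(1 - cmod z) * (l2norm h)\<^sup>2 + ((cmod z)\<^sup>2 - cmod z) * (l2norm g)\<^sup>2
      = (\<Sum>i. (1 - cmod z) * (cmod (h i))\<^sup>2 + ((cmod z)\<^sup>2 - cmod z) * (cmod (g i))\<^sup>2)"
    using assms g h
    by (simp add: l2norm_power2 suminf_add[symmetric] suminf_mult summable_mult)
  also have "\<dots> \<le> (\<Sum>i. (cmod (h i - z * g i))\<^sup>2)"
    using g h l2_diff_mult[OF assms, of z]
    by (intro suminf_le norm_diff_mult_power2_ge summable_add summable_mult) (simp_all add: l2_def)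
  also have "\<dots> = (l2norm (\<lambda>i. h i - z * g i))\<^sup>2"
    using l2_diff_mult[OF assms] by (simp add: l2norm_power2)
  finally show ?thesis .
qed

lemma koopman_apply [simp]: "koopman F g i = g (F i)"
  by (simp add: koopman_def)

lemma inj_imp_in_OmegaB:
  assumes "inj F"
  shows "F \<in> OmegaB"
proof -
  have "koopman F g \<in> l2 \<and> l2norm (koopman F g) \<le> 1 * l2norm g" if "g \<in> l2" for g
    using l2_comp_inj[OF assms that] l2norm_comp_inj_le[OF assms that] by (simp add: koopman_def o_def)
  then show ?thesis
    unfolding OmegaB_def by blast
qed

lemma sigma_inf_koopman_le:
  assumes "F \<in> OmegaB" "g \<in> l2" "l2norm g = 1"
  shows "sigma_inf_koopman F z \<le> l2norm (\<lambda>i. g (F i) - z * g i)"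
proof -
  have "0 \<le> l2norm (\<lambda>i. h (F i) - z * h i)" if "h \<in> l2" for h
    using that assms(1) by (intro l2norm_nonneg l2_diff_mult) (auto simp: OmegaB_def koopman_def o_def)
  then show ?thesis
    unfolding sigma_inf_koopman_def using assms(2,3)
    by (intro cInf_lower) (auto simp: bdd_below_def)
qed

lemma sigma_inf_koopman_ge:
  assumes "\<And>g. g \<in> l2 \<Longrightarrow> l2norm g = 1 \<Longrightarrow> c \<le> l2norm (\<lambda>i. g (F i) - z * g i)"
  shows "c \<le> sigma_inf_koopman F z"
  unfolding sigma_inf_koopman_def
  using assms indicator_in_l2 l2norm_indicator by (intro cInf_greatest) auto

lemma eigenvalue_in_Sp_ap_eps:
  assumes "F \<in> OmegaB" "0 < \<epsilon>" "g \<in> l2" "l2norm g = 1" "\<And>i. g (F i) = z * g i"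
  shows "z \<in> Sp_ap_eps \<epsilon> F"
proof -
  have "sigma_inf_koopman F z \<le> 0"
    using sigma_inf_koopman_le[OF assms(1,3,4), of z] by (simp add: assms(5) l2norm_def)
  then show ?thesis
    unfolding Sp_ap_eps_def using assms(2) closure_subset by fastforce
qed

lemma Sp_ap_eps_missed_point:
  assumes "inj H" "a \<notin> range H" "0 < \<epsilon>"
  shows "0 \<in> Sp_ap_eps \<epsilon> H"
  using assms(2)
  by (intro eigenvalue_in_Sp_ap_eps[OF inj_imp_in_OmegaB[OF assms(1)] assms(3) indicator_in_l2[of a]
        l2norm_indicator]) (auto simp: indicator_def)

lemma Sp_ap_eps_fixed_point:
  assumes "inj F" "F p = p" "0 < \<epsilon>"
  shows "1 \<in> Sp_ap_eps \<epsilon> F"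
proof -
  have "F i = p \<longleftrightarrow> i = p" for i
    by (metis assms(1,2) injD)
  then show ?thesis
    by (intro eigenvalue_in_Sp_ap_eps[OF inj_imp_in_OmegaB[OF assms(1)] assms(3) indicator_in_l2[of p]
          l2norm_indicator]) (simp add: indicator_def)
qed

lemma Sp_ap_eps_subset_sublevel:
  assumes "continuous_on UNIV f" "\<And>z. f z \<le> sigma_inf_koopman F z"
  shows "Sp_ap_eps \<epsilon> F \<subseteq> {z. f z \<le> \<epsilon>}"
  unfolding Sp_ap_eps_def
proof (rule closure_minimal)
  show "{z. sigma_inf_koopman F z < \<epsilon>} \<subseteq> {z. f z \<le> \<epsilon>}"
    using assms(2) by (fastforce intro: order.strict_trans1 less_imp_le)
  show "closed {z. f z \<le> \<epsilon>}"
    using closed_Collect_le[OF assms(1) continuous_on_const] .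
qed

lemma sigma_inf_koopman_inj_ge:
  assumes "inj F"
  shows "cmod z - 1 \<le> sigma_inf_koopman F z"
proof (rule sigma_inf_koopman_ge)
  fix g assume g: "g \<in> l2" "l2norm g = 1"
  define h where "h = (\<lambda>i. g (F i))"
  have h: "h \<in> l2" "l2norm h \<le> 1"
    using l2_comp_inj[OF assms g(1)] l2norm_comp_inj_le[OF assms g(1)] g(2) by (simp_all add: h_def)
  show "cmod z - 1 \<le> l2norm (\<lambda>i. g (F i) - z * g i)"
  proof (cases "cmod z \<le> 1")
    case True
    have "0 \<le> l2norm (\<lambda>i. g (F i) - z * g i)"
      using l2norm_nonneg[OF l2_diff_mult[OF g(1) h(1)]] by (simp add: h_def)
    with True show ?thesis
      by linarith
  next
    case False
    have "(l2norm h)\<^sup>2 \<le> 1"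
      using h l2norm_nonneg[OF h(1)] by (simp add: power_le_one)
    then have "(1 - cmod z) * 1 \<le> (1 - cmod z) * (l2norm h)\<^sup>2"
      using False by (intro mult_left_mono_neg) auto
    then have "(cmod z - 1)\<^sup>2 \<le> (1 - cmod z) * (l2norm h)\<^sup>2 + ((cmod z)\<^sup>2 - cmod z) * (l2norm g)\<^sup>2"
      using g(2) by (simp add: power2_eq_square algebra_simps)
    also have "\<dots> \<le> (l2norm (\<lambda>i. h i - z * g i))\<^sup>2"
      by (rule l2norm_diff_mult_power2_ge[OF g(1) h(1)])
    finally have "cmod z - 1 \<le> l2norm (\<lambda>i. h i - z * g i)"
      using l2norm_nonneg[OF l2_diff_mult[OF g(1) h(1)]] by (rule power2_le_imp_le)
    then show ?thesis
      by (simp add: h_def)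
  qed
qed

lemma sigma_inf_koopman_bij_ge:
  assumes "bij F"
  shows "\<bar>1 - cmod z\<bar> \<le> sigma_inf_koopman F z"
proof (rule sigma_inf_koopman_ge)
  fix g assume g: "g \<in> l2" "l2norm g = 1"
  define h where "h = (\<lambda>i. g (F i))"
  have h: "h \<in> l2" "l2norm h = 1"
    using l2_comp_inj[OF bij_is_inj[OF assms] g(1)] l2norm_comp_bij[OF assms g(1)] g(2)
    by (simp_all add: h_def)
  have "\<bar>1 - cmod z\<bar>\<^sup>2 = (1 - cmod z) * (l2norm h)\<^sup>2 + ((cmod z)\<^sup>2 - cmod z) * (l2norm g)\<^sup>2"
    using g(2) h(2) by (simp add: power2_eq_square algebra_simps)
  also have "\<dots> \<le> (l2norm (\<lambda>i. h i - z * g i))\<^sup>2"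
    by (rule l2norm_diff_mult_power2_ge[OF g(1) h(1)])
  finally have "\<bar>1 - cmod z\<bar> \<le> l2norm (\<lambda>i. h i - z * g i)"
    using l2norm_nonneg[OF l2_diff_mult[OF g(1) h(1)]] by (rule power2_le_imp_le)
  then show "\<bar>1 - cmod z\<bar> \<le> l2norm (\<lambda>i. g (F i) - z * g i)"
    by (simp add: h_def)
qed

lemma Sp_ap_eps_inj_subset_cball:
  assumes "inj F"
  shows "Sp_ap_eps \<epsilon> F \<subseteq> cball 0 (1 + \<epsilon>)"
proof -
  have "Sp_ap_eps \<epsilon> F \<subseteq> {z. cmod z - 1 \<le> \<epsilon>}"
    using sigma_inf_koopman_inj_ge[OF assms]
    by (intro Sp_ap_eps_subset_sublevel continuous_intros)
  then show ?thesis
    by auto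
qed

lemma Sp_ap_eps_bij_norm_ge:
  assumes "bij F" "z \<in> Sp_ap_eps \<epsilon> F"
  shows "1 - \<epsilon> \<le> cmod z"
proof -
  have "Sp_ap_eps \<epsilon> F \<subseteq> {z. \<bar>1 - cmod z\<bar> \<le> \<epsilon>}"
    using sigma_inf_koopman_bij_ge[OF assms(1)]
    by (intro Sp_ap_eps_subset_sublevel continuous_intros)
  then show ?thesis
    using assms(2) by auto
qed

lemma infdist_le_hausdorff_dist_left:
  assumes "compact X" "x \<in> X"
  shows "infdist x S \<le> hausdorff_dist X S"
proof -
  have "bdd_above ((\<lambda>a. infdist a S) ` X)"
    using assms(1)
    by (intro bounded_imp_bdd_above compact_imp_bounded compact_continuous_image continuous_intros)
  then have "infdist x S \<le> (SUP a\<in>X. infdist a S)"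
    using assms(2) by (rule cSUP_upper2) simp
  then show ?thesis
    unfolding hausdorff_dist_def by simp
qed

lemma infdist_le_hausdorff_dist_right:
  assumes "bounded S" "X \<noteq> {}" "p \<in> S"
  shows "infdist p X \<le> hausdorff_dist X S"
proof -
  obtain x0 where x0: "x0 \<in> X"
    using assms(2) by blast
  obtain B where B: "\<And>b. b \<in> S \<Longrightarrow> cmod b \<le> B"
    using assms(1) by (auto simp: bounded_iff)
  have "infdist b X \<le> B + cmod x0" if "b \<in> S" for b
    using infdist_le[OF x0, of b] norm_triangle_ineq4[of b x0] B[OF that] by (simp add: dist_norm)
  then have "bdd_above ((\<lambda>b. infdist b X) ` S)"
    by (intro bdd_aboveI2)
  then have "infdist p X \<le> (SUP b\<in>S. infdist b X)"
    using assms(3) by (rule cSUP_upper2) simp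
  then show ?thesis
    unfolding hausdorff_dist_def by simp
qed

definition shift_extension :: "nat \<Rightarrow> (nat \<Rightarrow> nat) \<Rightarrow> nat \<Rightarrow> nat" where
  "shift_extension a G i = (if i < a then G i else Suc i)"

definition close_cycle :: "nat \<Rightarrow> (nat \<Rightarrow> nat) \<Rightarrow> nat \<Rightarrow> nat \<Rightarrow> nat" where
  "close_cycle a G b i = (if i < b then shift_extension a G i else if i = b then a else i)"

lemma shift_extension_less_iff:
  assumes "G permutes {..<a}"
  shows "shift_extension a G i < a \<longleftrightarrow> i < a"
  using permutes_in_image[OF assms, of i] by (simp add: shift_extension_def)

lemma inj_shift_extension:
  assumes "G permutes {..<a}"
  shows "inj (shift_extension a G)"
proof (rule injI)
  fix x y
  assume eq: "shift_extension a G x = shift_extension a G y"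
  then have "x < a \<longleftrightarrow> y < a"
    by (metis assms shift_extension_less_iff)
  with eq permutes_inj[OF assms] show "x = y"
    by (cases "x < a") (simp_all add: shift_extension_def inj_eq)
qed

lemma shift_extension_neq:
  assumes "G permutes {..<a}"
  shows "shift_extension a G i \<noteq> a"
  using shift_extension_less_iff[OF assms, of i] by (cases "i < a") (auto simp: shift_extension_def)

lemma close_cycle_permutes:
  assumes G: "G permutes {..<a}" and "a \<le> b"
  shows "close_cycle a G b permutes {..b}"
proof (rule inj_imp_permutes)
  have "close_cycle a G b i \<le> b" if "i \<le> b" for i
    using that assms shift_extension_less_iff[OF G, of i]
    by (auto simp: close_cycle_def shift_extension_def)
  then show "\<And>i. i \<in> {..b} \<Longrightarrow> close_cycle a G b i \<in> {..b}"
    by simp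
  show "inj_on (close_cycle a G b) {..b}"
  proof (rule inj_onI)
    fix x y
    assume "x \<in> {..b}" "y \<in> {..b}" and eq: "close_cycle a G b x = close_cycle a G b y"
    then consider "x < b" "y < b" | "x = b" "y = b" | "x < b" "y = b" | "x = b" "y < b"
      by fastforce
    then show "x = y"
    proof cases
      case 1
      with eq show ?thesis
        using injD[OF inj_shift_extension[OF G]] by (simp add: close_cycle_def)
    qed (use eq shift_extension_neq[OF G] in \<open>simp_all add: close_cycle_def eq_commute[of a]\<close>)
  qed
qed (auto simp: close_cycle_def)

(* Stage k is a pair (a, G) with G permuting {..<a}.  Given the bound s k H on the indices that
   are read from the approximant H = shift_extension a G, the next stage closes the cycle
   (a a+1 ... b) for some b beyond that bound.  The limit is the product of all these cycles. *)
context
  fixes s :: "nat \<Rightarrow> (nat \<Rightarrow> nat) \<Rightarrow> nat"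
begin

primrec stage :: "nat \<Rightarrow> nat \<times> (nat \<Rightarrow> nat)" where
  "stage 0 = (1, id)"
| "stage (Suc k) =
     (let (a, G) = stage k; b = max a (Suc (s k (shift_extension a G))) in (Suc b, close_cycle a G b))"

definition prefix_len :: "nat \<Rightarrow> nat" where
  "prefix_len k = fst (stage k)"

definition prefix_perm :: "nat \<Rightarrow> nat \<Rightarrow> nat" where
  "prefix_perm k = snd (stage k)"

definition stage_approx :: "nat \<Rightarrow> nat \<Rightarrow> nat" where
  "stage_approx k = shift_extension (prefix_len k) (prefix_perm k)"

definition cycle_end :: "nat \<Rightarrow> nat" where
  "cycle_end k = max (prefix_len k) (Suc (s k (stage_approx k)))"

definition limit_perm :: "nat \<Rightarrow> nat" where
  "limit_perm i = prefix_perm (Suc i) i"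

lemma prefix_len_simps [simp]:
  "prefix_len 0 = 1" "prefix_len (Suc k) = Suc (cycle_end k)"
  by (simp_all add: prefix_len_def cycle_end_def stage_approx_def prefix_perm_def split_beta Let_def)

lemma prefix_perm_simps [simp]:
  "prefix_perm 0 = id" "prefix_perm (Suc k) = close_cycle (prefix_len k) (prefix_perm k) (cycle_end k)"
  by (simp_all add: prefix_len_def cycle_end_def stage_approx_def prefix_perm_def split_beta Let_def)

lemma prefix_len_le_cycle_end: "prefix_len k \<le> cycle_end k"
  by (simp add: cycle_end_def)

lemma prefix_perm_permutes: "prefix_perm k permutes {..<prefix_len k}"
proof (induction k)
  case 0
  show ?case
    by (simp only: prefix_perm_simps(1) permutes_id)
next
  case (Suc k)
  show ?case
    using close_cycle_permutes[OF Suc prefix_len_le_cycle_end] by (simp add: lessThan_Suc_atMost)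
qed

lemma prefix_len_less_Suc: "prefix_len k < prefix_len (Suc k)"
  using prefix_len_le_cycle_end[of k] by simp

lemma less_prefix_len: "k < prefix_len k"
proof (induction k)
  case (Suc k)
  then show ?case
    using prefix_len_less_Suc[of k] by linarith
qed simp

lemma prefix_len_mono: "k \<le> m \<Longrightarrow> prefix_len k \<le> prefix_len m"
  by (rule lift_Suc_mono_le[of prefix_len, OF less_imp_le[OF prefix_len_less_Suc]])

lemma prefix_perm_stable:
  assumes "k \<le> m" "i < prefix_len k"
  shows "prefix_perm m i = prefix_perm k i"
  using assms
proof (induction m rule: dec_induct)
  case (step m)
  then have "i < prefix_len m"
    using prefix_len_mono[of k m] by simp
  with step show ?case
    using prefix_len_le_cycle_end[of m]
    by (simp add: close_cycle_def shift_extension_def)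
qed simp

lemma limit_perm_eq: "i < prefix_len k \<Longrightarrow> limit_perm i = prefix_perm k i"
  using prefix_perm_stable[of k "max k (Suc i)" i] prefix_perm_stable[of "Suc i" "max k (Suc i)" i]
    less_prefix_len[of "Suc i"]
  by (simp add: limit_perm_def)

lemma limit_perm_agrees_stage_approx:
  assumes "j \<le> s k (stage_approx k)"
  shows "limit_perm j = stage_approx k j"
proof -
  have "j < cycle_end k"
    using assms by (simp add: cycle_end_def)
  then show ?thesis
    using limit_perm_eq[of j "Suc k"] by (simp add: close_cycle_def stage_approx_def)
qed

lemma bij_limit_perm: "bij limit_perm"
proof (rule bijI)
  show "inj limit_perm"
  proof (rule injI)
    fix x y
    assume eq: "limit_perm x = limit_perm y"
    define k where "k = Suc (max x y)"
    have "x < prefix_len k" "y < prefix_len k"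
      using less_prefix_len[of k] by (auto simp: k_def)
    with eq have "prefix_perm k x = prefix_perm k y"
      by (metis limit_perm_eq)
    then show "x = y"
      using permutes_inj[OF prefix_perm_permutes] by (simp add: inj_eq)
  qed
  have "y \<in> range limit_perm" for y
  proof -
    have "y \<in> prefix_perm y ` {..<prefix_len y}"
      using permutes_image[OF prefix_perm_permutes, of y] less_prefix_len[of y] by simp
    then obtain x where "x < prefix_len y" "prefix_perm y x = y"
      by auto
    then show ?thesis
      by (metis limit_perm_eq rangeI)
  qed
  then show "surj limit_perm"
    by blast
qed

lemma limit_perm_0: "limit_perm 0 = 0"
  using limit_perm_eq[of 0 0] by simp

end

lemma exists_bij_agreeing_with_nonsurj_injections:
  fixes s :: "nat \<Rightarrow> (nat \<Rightarrow> nat) \<Rightarrow> nat"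
  obtains F where "bij F" "F 0 = 0"
    "\<And>k. \<exists>H a. inj H \<and> a \<notin> range H \<and> (\<forall>j \<le> s k H. F j = H j)"
proof
  show "bij (limit_perm s)" "limit_perm s 0 = 0"
    by (rule bij_limit_perm limit_perm_0)+
  fix k
  have "inj (stage_approx s k)" "prefix_len s k \<notin> range (stage_approx s k)"
    unfolding stage_approx_def
    using inj_shift_extension[OF prefix_perm_permutes] shift_extension_neq[OF prefix_perm_permutes]
    by (auto dest: sym)
  then show "\<exists>H a. inj H \<and> a \<notin> range H \<and> (\<forall>j \<le> s k H. limit_perm s j = H j)"
    using limit_perm_agrees_stage_approx by blast
qed

lemma hausdorff_dist_ge_if_agrees_with_nonsurj:
  assumes alg: "general_algorithm OmegaB \<Gamma> L"
    and "0 < \<epsilon>"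
    and H: "inj H" "a \<notin> range H"
    and F: "bij F" "Sp_ap_eps \<epsilon> F \<noteq> {}"
    and agree: "\<forall>j \<le> Max (L H). F j = H j"
  shows "1 - \<epsilon> - hausdorff_dist (\<Gamma> H) (Sp_ap_eps \<epsilon> H) \<le> hausdorff_dist (\<Gamma> F) (Sp_ap_eps \<epsilon> F)"
proof -
  have H_in: "H \<in> OmegaB" and F_in: "F \<in> OmegaB"
    using inj_imp_in_OmegaB H(1) bij_is_inj[OF F(1)] by blast+
  have X: "\<Gamma> H \<noteq> {}" "compact (\<Gamma> H)"
    using alg H_in unfolding general_algorithm_def by blast+
  have "finite (L H)"
    using alg H_in unfolding general_algorithm_def by blast
  with agree have "\<forall>j\<in>L H. F j = H j"
    by simp
  then have same_output: "\<Gamma> F = \<Gamma> H"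
    using alg H_in F_in unfolding general_algorithm_def by blast
  have "infdist 0 (\<Gamma> H) \<le> hausdorff_dist (\<Gamma> H) (Sp_ap_eps \<epsilon> H)"
    using Sp_ap_eps_missed_point[OF H \<open>0 < \<epsilon>\<close>]
      bounded_subset[OF bounded_cball Sp_ap_eps_inj_subset_cball[OF H(1)]] X(1)
    by (intro infdist_le_hausdorff_dist_right)
  moreover obtain x where x: "x \<in> \<Gamma> H" "infdist 0 (\<Gamma> H) = dist 0 x"
    using infdist_attains_inf[OF compact_imp_closed[OF X(2)] X(1)] by blast
  moreover obtain y where y: "y \<in> Sp_ap_eps \<epsilon> F" "infdist x (Sp_ap_eps \<epsilon> F) = dist x y"
    using infdist_attains_inf[OF _ F(2)] by (metis Sp_ap_eps_def closed_closure)
  moreover have "1 - \<epsilon> \<le> cmod y"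
    using Sp_ap_eps_bij_norm_ge[OF F(1) y(1)] .
  moreover have "infdist x (Sp_ap_eps \<epsilon> F) \<le> hausdorff_dist (\<Gamma> F) (Sp_ap_eps \<epsilon> F)"
    using infdist_le_hausdorff_dist_left[OF X(2) x(1)] same_output by simp
  moreover have "cmod y - cmod x \<le> dist x y"
    by (metis dist_commute dist_norm norm_triangle_ineq2)
  ultimately show ?thesis
    by simp
qed

lemma eventually_sequentially_obtain_index:
  assumes "\<And>H. P H \<Longrightarrow> eventually (Q H) sequentially"
  obtains n where "\<And>k H. P H \<Longrightarrow> k \<le> n k H \<and> Q H (n k H)"
proof -
  have "k \<le> (SOME m. k \<le> m \<and> Q H m) \<and> Q H (SOME m. k \<le> m \<and> Q H m)" if H: "P H" for k H
  proof -
    obtain N where "\<forall>m\<ge>N. Q H m"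
      using assms[OF H] by (auto simp: eventually_sequentially)
    then have "\<exists>m. k \<le> m \<and> Q H m"
      by (intro exI[of _ "max k N"]) simp
    then show ?thesis
      by (rule someI_ex)
  qed
  then show ?thesis
    by (rule that)
qed

theorem mainTheorem9:
  fixes \<epsilon> :: real
  assumes "0 < \<epsilon>" and "\<epsilon> < 1"
  shows "\<not> (\<exists>(\<Gamma> :: nat \<Rightarrow> (nat \<Rightarrow> nat) \<Rightarrow> complex set) (L :: nat \<Rightarrow> (nat \<Rightarrow> nat) \<Rightarrow> nat set).
            (\<forall>n. general_algorithm OmegaB (\<Gamma> n) (L n)) \<and>
            (\<forall>F\<in>OmegaB. (\<lambda>n. hausdorff_dist (\<Gamma> n F) (Sp_ap_eps \<epsilon> F)) \<longlonglongrightarrow> 0))"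
proof
  assume "\<exists>\<Gamma> L. (\<forall>n. general_algorithm OmegaB (\<Gamma> n) (L n)) \<and>
            (\<forall>F\<in>OmegaB. (\<lambda>n. hausdorff_dist (\<Gamma> n F) (Sp_ap_eps \<epsilon> F)) \<longlonglongrightarrow> 0)"
  then obtain \<Gamma> L where alg: "\<And>n. general_algorithm OmegaB (\<Gamma> n) (L n)"
    and conv: "\<And>F. F \<in> OmegaB \<Longrightarrow> (\<lambda>n. hausdorff_dist (\<Gamma> n F) (Sp_ap_eps \<epsilon> F)) \<longlonglongrightarrow> 0"
    by blast
  define \<delta> where "\<delta> = (1 - \<epsilon>) / 2"
  have "0 < \<delta>"
    using assms(2) by (simp add: \<delta>_def)
  then have close: "eventually (\<lambda>m. hausdorff_dist (\<Gamma> m F) (Sp_ap_eps \<epsilon> F) < \<delta>) sequentially"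
    if "F \<in> OmegaB" for F
    using order_tendstoD(2)[OF conv[OF that]] by blast
  obtain n where n: "\<And>k H. inj H \<Longrightarrow> k \<le> n k H \<and> hausdorff_dist (\<Gamma> (n k H) H) (Sp_ap_eps \<epsilon> H) < \<delta>"
  proof (rule eventually_sequentially_obtain_index[where P = inj])
    fix H :: "nat \<Rightarrow> nat"
    assume "inj H"
    then show "eventually (\<lambda>m. hausdorff_dist (\<Gamma> m H) (Sp_ap_eps \<epsilon> H) < \<delta>) sequentially"
      by (intro close inj_imp_in_OmegaB)
  qed blast
  obtain F where F: "bij F" "F 0 = 0"
    and stages: "\<And>k. \<exists>H a. inj H \<and> a \<notin> range H \<and> (\<forall>j \<le> Max (L (n k H) H). F j = H j)"
    using exists_bij_agreeing_with_nonsurj_injections[of "\<lambda>k H. Max (L (n k H) H)"] by blast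
  have "\<exists>m\<ge>k. \<delta> \<le> hausdorff_dist (\<Gamma> m F) (Sp_ap_eps \<epsilon> F)" for k
  proof -
    obtain H a where H: "inj H" "a \<notin> range H" and agree: "\<forall>j \<le> Max (L (n k H) H). F j = H j"
      using stages by blast
    have "1 - \<epsilon> - hausdorff_dist (\<Gamma> (n k H) H) (Sp_ap_eps \<epsilon> H)
                 \<le> hausdorff_dist (\<Gamma> (n k H) F) (Sp_ap_eps \<epsilon> F)"
      using Sp_ap_eps_fixed_point[OF bij_is_inj[OF F(1)] F(2) assms(1)]
      by (intro hausdorff_dist_ge_if_agrees_with_nonsurj[OF alg assms(1) H F(1) _ agree]) auto
    then show ?thesis
      using n[OF H(1), of k] by (intro exI[of _ "n k H"]) (simp add: \<delta>_def)
  qed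
  moreover obtain N where "\<forall>m\<ge>N. hausdorff_dist (\<Gamma> m F) (Sp_ap_eps \<epsilon> F) < \<delta>"
    using close[OF inj_imp_in_OmegaB[OF bij_is_inj[OF F(1)]]] by (auto simp: eventually_sequentially)
  ultimately show False
    by (meson not_le)
qed

end
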